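(* There is an absolute constant $c>0$ such that the following holds. Let $G$ be a finite simple graph with maximum degree $d\ge 1$, and let $D(G)$ be a straight-line drawing of $G$ in the base plane $\mathcal{P}_1=\{z=0\}\subset\mathbb{R}^3$ with arbitrary but distinct vertex positions (no assumption on the angular resolution of $D(G)$). Then there is a 3D arc diagram drawing of $G$ with base plane $\mathcal{P}_1$ and with the same vertex positions as $D(G)$ whose angular resolution is at least $c/d$.
   Context: A 3D arc diagram drawing of $G$ with base plane $\mathcal{P}_1=\{z=0\}$ is a placement of the vertices at distinct points of $\mathcal{P}_1$, together with, for each edge $e=(a,b)$, a circular arc (a contiguous subset of a circle; a straight segment is allowed as the degenerate case) with endpoints at the positions of $a$ and $b$, such that: the arc lies in the plane $\mathcal{P}_2$ containing the segment $ab$ and perpendicular to $\mathcal{P}_1$ (so the arc projects perpendicularly onto the segment $ab$ in $\mathcal{P}_1$); all arcs lie in the closed half-space $z\ge 0$; and the arc forms the same angle $\alpha_e\in[0,\pi/2]$ with the segment $ab$ at both of its endpoints. The angle between two arcs incident to a common vertex $v$ is the angle in $[0,\pi]$ between their tangent rays at $v$ (directed into the arcs). The angular resolution of the drawing is the minimum of this angle over all vertices $v$ and all pairs of distinct edges incident to $v$. *)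

theory Defs
  imports "HOL-Analysis.Analysis"
begin

type_synonym point3 = "real \<times> real \<times> real"

definition simple_graph :: "nat set \<Rightarrow> nat set set \<Rightarrow> bool" where
  "simple_graph V E \<longleftrightarrow> finite V \<and>
     (\<forall>e\<in>E. \<exists>a b. a \<noteq> b \<and> a \<in> V \<and> b \<in> V \<and> e = {a, b})"

definition degree :: "nat set set \<Rightarrow> nat \<Rightarrow> nat" where
  "degree E v = card {e \<in> E. v \<in> e}"

definition max_degree :: "nat set \<Rightarrow> nat set set \<Rightarrow> nat" where
  "max_degree V E = Max (degree E ` V)"

definition other_end :: "nat set \<Rightarrow> nat \<Rightarrow> nat" where
  "other_end e v = (THE w. w \<in> e \<and> w \<noteq> v)"

definition lift :: "real \<times> real \<Rightarrow> point3" where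
  "lift q = (fst q, snd q, 0)"

definition ez :: point3 where "ez = (0, 0, 1)"

text \<open>The circular arc (a segment if alpha = 0) from P to Q (points of the base plane,
  P \<noteq> Q) lying in the vertical plane through P and Q, in the half-space z \<ge> 0,
  making the angle alpha with the segment PQ at both endpoints.
  For 0 < alpha \<le> pi/2 this is the arc of the circle with centre m - (L/2) cot(alpha) ez and
  radius L/(2 sin alpha); it is the unique such circular arc.\<close>
definition arc_path :: "point3 \<Rightarrow> point3 \<Rightarrow> real \<Rightarrow> real \<Rightarrow> point3" where
  "arc_path P Q \<alpha> t =
     (let s = 1 - 2 * t; m = (1/2) *\<^sub>R (P + Q); L = norm (Q - P); u = (1 / L) *\<^sub>R (Q - P) in
      if \<alpha> = 0 then m - (L/2 * s) *\<^sub>R u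
      else m - (L/2 * sin (\<alpha> * s) / sin \<alpha>) *\<^sub>R u
             + (L/2 * (cos (\<alpha> * s) - cos \<alpha>) / sin \<alpha>) *\<^sub>R ez)"

definition vec_angle :: "point3 \<Rightarrow> point3 \<Rightarrow> real" where
  "vec_angle x y = arccos (inner x y / (norm x * norm y))"

definition arc_tangent :: "(nat \<Rightarrow> real \<times> real) \<Rightarrow> (nat set \<Rightarrow> real) \<Rightarrow> nat set \<Rightarrow> nat \<Rightarrow> point3" where
  "arc_tangent p \<alpha> e v =
     vector_derivative (arc_path (lift (p v)) (lift (p (other_end e v))) (\<alpha> e)) (at 0 within {0..1})"

text \<open>A 3D arc diagram drawing with base plane z=0 and vertex positions p is determined by
  choosing, for every edge e, the common endpoint angle alpha e \<in> [0, pi/2].\<close>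
definition arc_diagram :: "nat set set \<Rightarrow> (nat set \<Rightarrow> real) \<Rightarrow> bool" where
  "arc_diagram E \<alpha> \<longleftrightarrow> (\<forall>e\<in>E. 0 \<le> \<alpha> e \<and> \<alpha> e \<le> pi / 2)"

definition angular_resolution_ge ::
  "nat set \<Rightarrow> nat set set \<Rightarrow> (nat \<Rightarrow> real \<times> real) \<Rightarrow> (nat set \<Rightarrow> real) \<Rightarrow> real \<Rightarrow> bool" where
  "angular_resolution_ge V E p \<alpha> r \<longleftrightarrow>
     (\<forall>v\<in>V. \<forall>e1\<in>E. \<forall>e2\<in>E. v \<in> e1 \<and> v \<in> e2 \<and> e1 \<noteq> e2 \<longrightarrow>
        vec_angle (arc_tangent p \<alpha> e1 v) (arc_tangent p \<alpha> e2 v) \<ge> r)"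

end

theory Submission
  imports Defs
begin

text \<open>At a vertex, the arc drawn with endpoint angle \<alpha> leaves in the direction obtained by
  tilting the horizontal unit vector towards its other end upwards by \<alpha>. Two such directions
  enclose an angle of at least the difference of their tilts, however close the horizontal
  directions are. So it suffices to give edges sharing a vertex tilts differing by \<pi>/(4d):
  properly colour the edges greedily with 2d - 1 colours and give colour i the tilt
  i\<pi>/(4d) < \<pi>/2.\<close>

definition tilt :: "point3 \<Rightarrow> real \<Rightarrow> point3" where
  "tilt u a = cos a *\<^sub>R u + sin a *\<^sub>R ez"

lemma arc_path_tangent_at_start:
  assumes "P \<noteq> Q" "0 \<le> a" "a \<le> pi/2"
  shows "\<exists>r>0. vector_derivative (arc_path P Q a) (at 0 within {0..1}) = r *\<^sub>R tilt (sgn (Q - P)) a"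
proof -
  define L where "L = norm (Q - P)"
  define u where "u = (1/L) *\<^sub>R (Q - P)"
  define m where "m = (1/2::real) *\<^sub>R (P + Q)"
  have L: "L > 0" using assms(1) by (simp add: L_def)
  have u: "u = sgn (Q - P)" by (simp add: u_def L_def sgn_div_norm divide_inverse_commute)
  show ?thesis
  proof (cases "a = 0")
    case True
    have "arc_path P Q a = (\<lambda>t. m - (L/2 * (1 - 2*t)) *\<^sub>R u)"
      by (rule ext) (simp add: arc_path_def True L_def u_def m_def Let_def)
    moreover have "((\<lambda>t. m - (L/2 * (1 - 2*t)) *\<^sub>R u) has_vector_derivative L *\<^sub>R u) (at 0)"
      by (auto intro!: derivative_eq_intros)
    ultimately have "vector_derivative (arc_path P Q a) (at 0 within {0..1}) = L *\<^sub>R u"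
      by (auto intro: vector_derivative_at_within_ivl)
    then show ?thesis using L True u by (auto simp: tilt_def)
  next
    case False
    have sa: "sin a > 0" using assms False by (intro sin_gt_zero) auto
    have "arc_path P Q a = (\<lambda>t. m - (L/2 * sin (a * (1 - 2*t)) / sin a) *\<^sub>R u
             + (L/2 * (cos (a * (1 - 2*t)) - cos a) / sin a) *\<^sub>R ez)"
      by (rule ext) (simp add: arc_path_def False L_def u_def m_def Let_def)
    moreover have "((\<lambda>t. m - (L/2 * sin (a * (1 - 2*t)) / sin a) *\<^sub>R u
             + (L/2 * (cos (a * (1 - 2*t)) - cos a) / sin a) *\<^sub>R ez) has_vector_derivative
          (L*a/sin a) *\<^sub>R tilt u a) (at 0)"
      using sa by (auto intro!: derivative_eq_intros simp: tilt_def algebra_simps)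
    ultimately have "vector_derivative (arc_path P Q a) (at 0 within {0..1}) = (L*a/sin a) *\<^sub>R tilt u a"
      by (auto intro: vector_derivative_at_within_ivl)
    moreover have "L*a/sin a > 0" using L sa assms False by simp
    ultimately show ?thesis using u by blast
  qed
qed

lemma vec_angle_scaleR:
  assumes "r > 0" "s > 0"
  shows "vec_angle (r *\<^sub>R x) (s *\<^sub>R y) = vec_angle x y"
  using assms by (simp add: vec_angle_def)

lemma inner_ez_ez [simp]: "inner ez ez = 1"
  by (simp add: ez_def)

lemma norm_tilt:
  assumes "inner u ez = 0" "norm u = 1"
  shows "norm (tilt u a) = 1"
proof -
  have "inner u u = 1" using assms(2) by (simp add: dot_square_norm)
  then have "inner (tilt u a) (tilt u a) = (cos a)\<^sup>2 + (sin a)\<^sup>2"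
    using assms(1) by (simp add: tilt_def inner_add_left inner_add_right inner_commute power2_eq_square)
  then show ?thesis by (simp add: norm_eq_sqrt_inner)
qed

lemma vec_angle_tilt_ge:
  assumes "inner u ez = 0" "norm u = 1" "inner w ez = 0" "norm w = 1"
    and "0 \<le> a" "a \<le> pi/2" "0 \<le> b" "b \<le> pi/2"
  shows "\<bar>a - b\<bar> \<le> vec_angle (tilt u a) (tilt w b)"
proof -
  have n: "norm (tilt u a) = 1" "norm (tilt w b) = 1" using assms by (simp_all add: norm_tilt)
  have "inner (tilt u a) (tilt w b) = cos a * cos b * inner u w + sin a * sin b"
    using assms(1,3) by (simp add: tilt_def inner_add_left inner_add_right inner_commute)
  also have "\<dots> \<le> cos a * cos b + sin a * sin b"
  proof -
    have "inner u w \<le> 1" using norm_cauchy_schwarz[of u w] assms(2,4) by simp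
    moreover have "cos a \<ge> 0" "cos b \<ge> 0" using assms by (auto intro!: cos_ge_zero)
    ultimately show ?thesis by (simp add: mult_left_le)
  qed
  also have "\<dots> = cos \<bar>a - b\<bar>" by (simp add: cos_diff)
  finally have le: "inner (tilt u a) (tilt w b) \<le> cos \<bar>a - b\<bar>" .
  have ge: "-1 \<le> inner (tilt u a) (tilt w b)" using Cauchy_Schwarz_ineq2[of "tilt u a" "tilt w b"] n by simp
  have "\<bar>a - b\<bar> = arccos (cos \<bar>a - b\<bar>)" using assms by (intro arccos_cos[symmetric]) auto
  also have "\<dots> \<le> arccos (inner (tilt u a) (tilt w b))" by (rule arccos_le_arccos[OF ge le]) simp
  also have "\<dots> = vec_angle (tilt u a) (tilt w b)" by (simp add: vec_angle_def n)
  finally show ?thesis .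
qed

lemma other_end_doubleton: "a \<noteq> b \<Longrightarrow> other_end {a, b} a = b"
  unfolding other_end_def by (rule the_equality) auto

lemma arc_tangent_eq_tilt:
  assumes "simple_graph V E" "inj_on p V" "e \<in> E" "v \<in> e" "0 \<le> \<alpha> e" "\<alpha> e \<le> pi/2"
  shows "\<exists>r>0. \<exists>u. inner u ez = 0 \<and> norm u = 1 \<and> arc_tangent p \<alpha> e v = r *\<^sub>R tilt u (\<alpha> e)"
proof -
  obtain w where w: "w \<noteq> v" "v \<in> V" "w \<in> V" "e = {v, w}"
    using assms(1,3,4) unfolding simple_graph_def by (metis empty_iff insert_commute insert_iff)
  then have "p v \<noteq> p w" using assms(2) by (metis inj_onD)
  then have "lift (p v) \<noteq> lift (p w)" by (simp add: lift_def prod_eq_iff)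
  then obtain r where "r > 0"
    "vector_derivative (arc_path (lift (p v)) (lift (p w)) (\<alpha> e)) (at 0 within {0..1}) =
       r *\<^sub>R tilt (sgn (lift (p w) - lift (p v))) (\<alpha> e)"
    using arc_path_tangent_at_start assms(5,6) by blast
  moreover have "other_end e v = w" using w by (simp add: other_end_doubleton)
  moreover have "inner (sgn (lift (p w) - lift (p v))) ez = 0" by (simp add: sgn_div_norm lift_def ez_def)
  moreover have "norm (sgn (lift (p w) - lift (p v))) = 1" using \<open>lift (p v) \<noteq> lift (p w)\<close> by (simp add: norm_sgn)
  ultimately show ?thesis unfolding arc_tangent_def by metis
qed

lemma angular_resolution_ge_if_tilts_separated:
  assumes "simple_graph V E" "inj_on p V" "arc_diagram E \<alpha>"
    and separated: "\<And>v e1 e2. e1 \<in> E \<Longrightarrow> e2 \<in> E \<Longrightarrow> v \<in> e1 \<Longrightarrow> v \<in> e2 \<Longrightarrow> e1 \<noteq> e2 \<Longrightarrow>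
      \<delta> \<le> \<bar>\<alpha> e1 - \<alpha> e2\<bar>"
  shows "angular_resolution_ge V E p \<alpha> \<delta>"
  unfolding angular_resolution_ge_def
proof (intro ballI impI)
  fix v e1 e2 assume h: "v \<in> V" "e1 \<in> E" "e2 \<in> E" "v \<in> e1 \<and> v \<in> e2 \<and> e1 \<noteq> e2"
  have range: "0 \<le> \<alpha> e \<and> \<alpha> e \<le> pi/2" if "e \<in> E" for e
    using assms(3) that by (simp add: arc_diagram_def)
  obtain r1 u1 where t1: "r1 > 0" "inner u1 ez = 0" "norm u1 = 1"
      "arc_tangent p \<alpha> e1 v = r1 *\<^sub>R tilt u1 (\<alpha> e1)"
    using arc_tangent_eq_tilt[OF assms(1,2)] h range by meson
  obtain r2 u2 where t2: "r2 > 0" "inner u2 ez = 0" "norm u2 = 1"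
      "arc_tangent p \<alpha> e2 v = r2 *\<^sub>R tilt u2 (\<alpha> e2)"
    using arc_tangent_eq_tilt[OF assms(1,2)] h range by meson
  have "\<delta> \<le> \<bar>\<alpha> e1 - \<alpha> e2\<bar>" using separated h by blast
  also have "\<dots> \<le> vec_angle (tilt u1 (\<alpha> e1)) (tilt u2 (\<alpha> e2))"
    using t1 t2 range h by (intro vec_angle_tilt_ge) auto
  finally show "\<delta> \<le> vec_angle (arc_tangent p \<alpha> e1 v) (arc_tangent p \<alpha> e2 v)"
    by (simp add: t1(1,4) t2(1,4) vec_angle_scaleR)
qed

definition proper_edge_colouring :: "nat set set \<Rightarrow> (nat set \<Rightarrow> nat) \<Rightarrow> bool" where
  "proper_edge_colouring E col \<longleftrightarrow>
     (\<forall>e1\<in>E. \<forall>e2\<in>E. e1 \<noteq> e2 \<and> e1 \<inter> e2 \<noteq> {} \<longrightarrow> col e1 \<noteq> col e2)"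

lemma exists_colour_not_in_image:
  assumes "finite N" "card N < k"
  shows "\<exists>c<k. c \<notin> col ` N"
proof -
  have "card (col ` N) < card {..<k}" using assms card_image_le[of N col] by simp
  then have "\<not> {..<k} \<subseteq> col ` N" using assms(1) by (meson card_mono finite_imageI not_le)
  then show ?thesis by auto
qed

lemma card_edges_meeting_new_edge_lt:
  assumes "finite F" "e \<notin> F" "e = {a, b}" "\<forall>v. degree (insert e F) v \<le> d"
  shows "card {f\<in>F. e \<inter> f \<noteq> {}} < 2*d - 1"
proof -
  have other_edges: "card {f\<in>F. x \<in> f} + 1 \<le> d" if "x \<in> e" for x
  proof -
    have "{f\<in>insert e F. x \<in> f} = insert e {f\<in>F. x \<in> f}" using that by auto
    then have "degree (insert e F) x = card {f\<in>F. x \<in> f} + 1"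
      using assms(1,2) by (simp add: degree_def)
    then show ?thesis using assms(4) by metis
  qed
  have "{f\<in>F. e \<inter> f \<noteq> {}} = {f\<in>F. a \<in> f} \<union> {f\<in>F. b \<in> f}" using assms(3) by auto
  then show ?thesis
    using card_Un_le[of "{f\<in>F. a \<in> f}" "{f\<in>F. b \<in> f}"] other_edges[of a] other_edges[of b] assms(3)
    by auto
qed

lemma proper_edge_colouring_insert:
  assumes "proper_edge_colouring F col" "e \<notin> F" "\<forall>f\<in>F. e \<inter> f \<noteq> {} \<longrightarrow> c \<noteq> col f"
  shows "proper_edge_colouring (insert e F) (col(e := c))"
  unfolding proper_edge_colouring_def
proof (intro ballI impI)
  fix e1 e2 assume e12: "e1 \<in> insert e F" "e2 \<in> insert e F" "e1 \<noteq> e2 \<and> e1 \<inter> e2 \<noteq> {}"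
  then consider "e1 = e" "e2 \<in> F" | "e2 = e" "e1 \<in> F" | "e1 \<in> F" "e2 \<in> F" "e1 \<noteq> e" "e2 \<noteq> e"
    using assms(2) by blast
  then show "(col(e := c)) e1 \<noteq> (col(e := c)) e2"
  proof cases
    case 1
    then have "e2 \<noteq> e" using assms(2) by blast
    then show ?thesis using 1 e12 assms(3) by simp
  next
    case 2
    then have "e1 \<noteq> e" using assms(2) by blast
    moreover have "c \<noteq> col e1" using 2 e12 assms(3) by (metis Int_commute)
    ultimately show ?thesis using 2 by simp
  next
    case 3
    then show ?thesis using e12 assms(1) by (simp add: proper_edge_colouring_def)
  qed
qed

lemma greedy_edge_colouring:
  fixes E :: "nat set set"
  assumes "finite E" "\<forall>e\<in>E. \<exists>a b. e = {a, b}" "\<forall>v. degree E v \<le> d"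
  shows "\<exists>col. (\<forall>e\<in>E. col e < 2*d - 1) \<and> proper_edge_colouring E col"
  using assms
proof (induction E rule: finite_induct)
  case empty
  show ?case by (intro exI[of _ "\<lambda>_. 0"]) (simp add: proper_edge_colouring_def)
next
  case (insert e F)
  have "degree F v \<le> degree (insert e F) v" for v
    using insert.hyps(1) unfolding degree_def by (intro card_mono) auto
  then have degree_F: "\<forall>v. degree F v \<le> d" using insert.prems(2) by (meson order_trans)
  have edges_F: "\<forall>f\<in>F. \<exists>a b. f = {a, b}" using insert.prems(1) by simp
  obtain col where col: "\<forall>e\<in>F. col e < 2*d - 1" "proper_edge_colouring F col"
    using insert.IH[OF edges_F degree_F] by (elim exE conjE)
  obtain a b where "e = {a, b}" using insert.prems(1) by auto
  then have "card {f\<in>F. e \<inter> f \<noteq> {}} < 2*d - 1"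
    by (rule card_edges_meeting_new_edge_lt[OF insert.hyps _ insert.prems(2)])
  moreover have "finite {f\<in>F. e \<inter> f \<noteq> {}}" using insert.hyps(1) by simp
  ultimately obtain c where c: "c < 2*d - 1" "c \<notin> col ` {f\<in>F. e \<inter> f \<noteq> {}}"
    using exists_colour_not_in_image by blast
  then have "\<forall>f\<in>F. e \<inter> f \<noteq> {} \<longrightarrow> c \<noteq> col f" by blast
  then have "proper_edge_colouring (insert e F) (col(e := c))"
    using proper_edge_colouring_insert col(2) insert.hyps(2) by blast
  moreover have "\<forall>f\<in>insert e F. (col(e := c)) f < 2*d - 1" using col(1) c(1) by simp
  ultimately show ?case by blast
qed

lemma simple_graph_edges_subset_Pow: "simple_graph V E \<Longrightarrow> E \<subseteq> Pow V"
  unfolding simple_graph_def by auto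

lemma simple_graph_finite_edges: "simple_graph V E \<Longrightarrow> finite E"
  by (meson finite_Pow_iff finite_subset simple_graph_def simple_graph_edges_subset_Pow)

lemma simple_graph_degree_le_max_degree:
  assumes "simple_graph V E"
  shows "degree E v \<le> max_degree V E"
proof (cases "v \<in> V")
  case True
  have "finite V" using assms by (simp add: simple_graph_def)
  then show ?thesis unfolding max_degree_def using True by (intro Max_ge) auto
next
  case False
  then have "{e\<in>E. v \<in> e} = {}" using simple_graph_edges_subset_Pow[OF assms] by auto
  then have "degree E v = 0" unfolding degree_def by (metis card.empty)
  then show ?thesis by simp
qed

theorem theorem2:
  shows "\<exists>c>0. \<forall>(V :: nat set) (E :: nat set set) (p :: nat \<Rightarrow> real \<times> real).
     simple_graph V E \<and> max_degree V E \<ge> 1 \<and> inj_on p V \<longrightarrow>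
     (\<exists>\<alpha>. arc_diagram E \<alpha> \<and> angular_resolution_ge V E p \<alpha> (c / real (max_degree V E)))"
proof (intro exI[of _ "pi/4"] conjI allI impI)
  fix V :: "nat set" and E :: "nat set set" and p :: "nat \<Rightarrow> real \<times> real"
  assume "simple_graph V E \<and> max_degree V E \<ge> 1 \<and> inj_on p V"
  then have G: "simple_graph V E" and d_pos: "max_degree V E \<ge> 1" and p: "inj_on p V" by auto
  define d where "d = max_degree V E"
  have edges: "\<forall>e\<in>E. \<exists>a b. e = {a, b}" using G unfolding simple_graph_def by metis
  have degrees: "\<forall>v. degree E v \<le> d" using G by (simp add: d_def simple_graph_degree_le_max_degree)
  obtain col where col: "\<forall>e\<in>E. col e < 2*d - 1" "proper_edge_colouring E col"
    using greedy_edge_colouring[OF simple_graph_finite_edges[OF G] edges degrees] by (elim exE conjE)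
  define k where "k = pi / (4 * real d)"
  have k: "k > 0" using d_pos by (simp add: k_def d_def)
  define \<alpha> where "\<alpha> e = real (col e) * k" for e
  have "arc_diagram E \<alpha>"
    using col(1) d_pos by (auto simp: arc_diagram_def \<alpha>_def k_def d_def field_simps)
  moreover have "k \<le> \<bar>\<alpha> e1 - \<alpha> e2\<bar>"
    if "e1 \<in> E" "e2 \<in> E" "v \<in> e1" "v \<in> e2" "e1 \<noteq> e2" for v e1 e2
  proof -
    have "col e1 \<noteq> col e2" using col(2) that unfolding proper_edge_colouring_def by blast
    then have "1 \<le> \<bar>real (col e1) - real (col e2)\<bar>" by (cases "col e1 < col e2") auto
    then show ?thesis using k by (simp add: \<alpha>_def abs_mult flip: left_diff_distrib)
  qed
  ultimately show "\<exists>\<alpha>. arc_diagram E \<alpha> \<and> angular_resolution_ge V E p \<alpha> (pi / 4 / real (max_degree V E))"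
    using angular_resolution_ge_if_tilts_separated[OF G p] unfolding k_def d_def by auto
qed simp

end
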